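(* Let $m,n\ge0$, $0\le k\le\min(m,n)$, and let $i,j$ be integers with $0\le i\le m$, $0\le j\le n$, $k\le i+j\le m+n-k$. Put $m'=n-k+i$, $n'=m-k+j$, $k'=i+j-k$. Then $$\binom{m+n-k}{m-k,\ n-k,\ k}\,c_{m',n',k'}(i,j)=(-1)^i\binom{m+n-k}{m-i,\ n-j,\ k'}\,c_{m,n,k}(i,j).$$
   Context: Multinomial coefficients: $\binom{a+b+c}{a,\ b,\ c}=\frac{(a+b+c)!}{a!\,b!\,c!}$ for nonnegative $a,b,c$. Let $e,f,h$ be the standard basis of $\mathfrak{sl}(2,\mathbb{C})$. $V(n)$ is the irreducible representation of highest weight $n$ with fixed highest weight vector $\phi_n$; $\{f^i\phi_n\}_{0\le i\le n}$ is a basis, $f^{n+1}\phi_n=0$. $\mathfrak{sl}(2)$ acts on $V(m)\otimes V(n)$ by $X(v\otimes w)=Xv\otimes w+v\otimes Xw$. For any $m,n\ge 0$ and $0\le k\le\min(m,n)$, $\phi_{m,n,k}=\sum_{l=0}^{k}(-1)^l\binom{m-l}{k-l}\binom{n-k+l}{l} f^l\phi_m\otimes f^{k-l}\phi_n\in V(m)\otimes V(n)$ (a highest weight vector of weight $m+n-2k$). The coordinates $c_{m,n,k}(i,j)$ are defined by $f^{p-k}\phi_{m,n,k}=\sum_{i+j=p,\,0\le i\le m,\,0\le j\le n} c_{m,n,k}(i,j)\, f^i\phi_m\otimes f^j\phi_n$ for $k\le p\le m+n-k$. *)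

theory Defs
  imports Complex_Main
begin

text \<open>Coordinates model of V(m) (x) V(n): a vector is its coefficient function
  with respect to the basis f^i phi_m (x) f^j phi_n, indexed by (i,j),
  0 <= i <= m, 0 <= j <= n (coefficients outside this box are 0).\<close>

definition multinomial3 :: "nat \<Rightarrow> nat \<Rightarrow> nat \<Rightarrow> nat" where
  "multinomial3 a b c = fact (a + b + c) div (fact a * fact b * fact c)"

text \<open>Action of f on V(m) (x) V(n): f(f^i phi_m (x) f^j phi_n) =
  f^(i+1) phi_m (x) f^j phi_n + f^i phi_m (x) f^(j+1) phi_n, where f^(m+1) phi_m = 0.\<close>
definition f_act :: "nat \<Rightarrow> nat \<Rightarrow> (nat \<times> nat \<Rightarrow> complex) \<Rightarrow> (nat \<times> nat \<Rightarrow> complex)" where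
  "f_act m n v = (\<lambda>(i, j). if i \<le> m \<and> j \<le> n then
      (if 0 < i then v (i - 1, j) else 0) + (if 0 < j then v (i, j - 1) else 0) else 0)"

definition phi_mnk :: "nat \<Rightarrow> nat \<Rightarrow> nat \<Rightarrow> (nat \<times> nat \<Rightarrow> complex)" where
  "phi_mnk m n k = (\<lambda>(l, j). if l + j = k \<and> l \<le> m \<and> j \<le> n then
      (-1) ^ l * of_nat ((m - l) choose (k - l)) * of_nat ((n - k + l) choose l) else 0)"

definition c_coord :: "nat \<Rightarrow> nat \<Rightarrow> nat \<Rightarrow> nat \<Rightarrow> nat \<Rightarrow> complex" where
  "c_coord m n k i j = ((f_act m n ^^ (i + j - k)) (phi_mnk m n k)) (i, j)"

end

theory Submission
  imports Defs
begin

text \<open>Since \<open>f\<close> acts on the tensor product as \<open>f \<otimes> 1 + 1 \<otimes> f\<close> and these commute, the binomial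
  theorem writes each coordinate \<open>c(i,j)\<close> as a sum over the index \<open>l\<close> of \<open>\<phi>\<close> of \<open>(-1)\<^sup>l\<close>
  times three binomial coefficients. After the substitution \<open>l \<mapsto> i - l\<close> in the left-hand
  coordinate both sums run over the same range, and the identity holds summand by summand,
  by a symmetry of products of multinomial and binomial coefficients.\<close>

lemma sum_choose_Suc_split:
  fixes g :: "nat \<Rightarrow> 'a::comm_semiring_1"
  shows "(\<Sum>a\<le>Suc t. of_nat (Suc t choose a) * g a)
       = (\<Sum>a\<le>t. of_nat (t choose a) * g (Suc a)) + (\<Sum>a\<le>t. of_nat (t choose a) * g a)"
proof -
  have "(\<Sum>a\<le>Suc t. of_nat (Suc t choose a) * g a)
      = g 0 + (\<Sum>a\<le>t. of_nat (t choose a) * g (Suc a) + of_nat (t choose Suc a) * g (Suc a))"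
    by (subst sum.atMost_Suc_shift) (simp add: distrib_right)
  also have "\<dots> = (\<Sum>a\<le>t. of_nat (t choose a) * g (Suc a))
                 + (g 0 + (\<Sum>a\<le>t. of_nat (t choose Suc a) * g (Suc a)))"
    by (simp add: sum.distrib algebra_simps)
  also have "g 0 + (\<Sum>a\<le>t. of_nat (t choose Suc a) * g (Suc a))
           = (\<Sum>a\<le>Suc t. of_nat (t choose a) * g a)"
    by (subst sum.atMost_Suc_shift) simp
  also have "\<dots> = (\<Sum>a\<le>t. of_nat (t choose a) * g a)"
    by (simp add: binomial_eq_0)
  finally show ?thesis .
qed

text \<open>\<open>a\<close> counts the factors \<open>f \<otimes> 1\<close> in the binomial expansion of \<open>(f \<otimes> 1 + 1 \<otimes> f)\<^sup>t\<close>.\<close>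
lemma funpow_f_act_apply:
  assumes "i \<le> m" "j \<le> n"
  shows "(f_act m n ^^ t) v (i, j)
       = (\<Sum>a\<le>t. of_nat (t choose a) * (if a \<le> i \<and> t - a \<le> j then v (i - a, j - (t - a)) else 0))"
  using assms
proof (induction t arbitrary: i j)
  case 0
  then show ?case by simp
next
  case (Suc t)
  define g where "g a = (if a \<le> i \<and> Suc t - a \<le> j then v (i - a, j - (Suc t - a)) else 0)" for a
  have first: "(if 0 < i then (f_act m n ^^ t) v (i - 1, j) else 0) = (\<Sum>a\<le>t. of_nat (t choose a) * g (Suc a))"
  proof (cases "i = 0")
    case False
    then have "(f_act m n ^^ t) v (i - 1, j)
        = (\<Sum>a\<le>t. of_nat (t choose a) * (if a \<le> i - 1 \<and> t - a \<le> j then v (i - 1 - a, j - (t - a)) else 0))"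
      using Suc.IH[of "i - 1" j] Suc.prems by simp
    also have "\<dots> = (\<Sum>a\<le>t. of_nat (t choose a) * g (Suc a))"
      by (rule sum.cong) (use False in \<open>auto simp: g_def\<close>)
    finally show ?thesis using False by simp
  qed (simp add: g_def)
  have second: "(if 0 < j then (f_act m n ^^ t) v (i, j - 1) else 0) = (\<Sum>a\<le>t. of_nat (t choose a) * g a)"
  proof (cases "j = 0")
    case False
    then have "(f_act m n ^^ t) v (i, j - 1)
        = (\<Sum>a\<le>t. of_nat (t choose a) * (if a \<le> i \<and> t - a \<le> j - 1 then v (i - a, j - 1 - (t - a)) else 0))"
      using Suc.IH[of i "j - 1"] Suc.prems by simp
    also have "\<dots> = (\<Sum>a\<le>t. of_nat (t choose a) * g a)"
      by (rule sum.cong) (use False in \<open>auto simp: g_def Suc_diff_le\<close>)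
    finally show ?thesis using False by simp
  qed (simp add: g_def)
  have "(f_act m n ^^ Suc t) v (i, j) = (if 0 < i then (f_act m n ^^ t) v (i - 1, j) else 0)
          + (if 0 < j then (f_act m n ^^ t) v (i, j - 1) else 0)"
    using Suc.prems by (simp add: f_act_def)
  also have "\<dots> = (\<Sum>a\<le>Suc t. of_nat (Suc t choose a) * g a)"
    unfolding first second sum_choose_Suc_split ..
  finally show ?case by (simp add: g_def)
qed

lemma c_coord_eq_sum:
  assumes "i \<le> m" "j \<le> n" "k \<le> i + j"
  shows "c_coord m n k i j = (\<Sum>l | l \<le> k \<and> l \<le> i \<and> k - l \<le> j.
           of_nat ((i + j - k) choose (i - l)) * (-1) ^ l
           * of_nat ((m - l) choose (k - l)) * of_nat ((n - k + l) choose l))"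
proof -
  let ?A = "{a. a \<le> i + j - k \<and> a \<le> i \<and> i + j - k - a \<le> j}"
  have "c_coord m n k i j = (\<Sum>a\<le>i + j - k. of_nat ((i + j - k) choose a) *
      (if a \<le> i \<and> i + j - k - a \<le> j then phi_mnk m n k (i - a, j - (i + j - k - a)) else 0))"
    unfolding c_coord_def using assms(1,2) by (rule funpow_f_act_apply)
  also have "\<dots> = (\<Sum>a\<le>i + j - k. if a \<le> i \<and> i + j - k - a \<le> j then
      of_nat ((i + j - k) choose a) * (-1) ^ (i - a)
      * of_nat ((m - (i - a)) choose (k - (i - a))) * of_nat ((n - k + (i - a)) choose (i - a)) else 0)"
    by (rule sum.cong) (use assms in \<open>auto simp: phi_mnk_def\<close>)
  also have "\<dots> = (\<Sum>a\<in>?A. of_nat ((i + j - k) choose a) * (-1) ^ (i - a)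
      * of_nat ((m - (i - a)) choose (k - (i - a))) * of_nat ((n - k + (i - a)) choose (i - a)))"
    by (subst sum.inter_filter[symmetric]) (simp_all add: atMost_def conj_assoc)
  also have "\<dots> = (\<Sum>l | l \<le> k \<and> l \<le> i \<and> k - l \<le> j.
           of_nat ((i + j - k) choose (i - l)) * (-1) ^ l
           * of_nat ((m - l) choose (k - l)) * of_nat ((n - k + l) choose l))"
    by (rule sum.reindex_bij_witness[where i="\<lambda>l. i - l" and j="\<lambda>a. i - a"]) (use assms in auto)
  finally show ?thesis .
qed

lemma c_coord_dual_eq_sum:
  assumes "k \<le> min m n" "i \<le> m" "j \<le> n" "k \<le> i + j"
  shows "c_coord (n - k + i) (m - k + j) (i + j - k) i j = (\<Sum>l | l \<le> k \<and> l \<le> i \<and> k - l \<le> j.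
           of_nat (k choose l) * (-1) ^ (i - l)
           * of_nat ((n - k + l) choose (j + l - k)) * of_nat ((m - l) choose (i - l)))"
proof -
  have "c_coord (n - k + i) (m - k + j) (i + j - k) i j
      = (\<Sum>l' | l' \<le> i + j - k \<and> l' \<le> i \<and> i + j - k - l' \<le> j.
           of_nat (k choose (i - l')) * (-1) ^ l'
           * of_nat ((n - k + i - l') choose (i + j - k - l'))
           * of_nat ((m - k + j - (i + j - k) + l') choose l'))"
    using c_coord_eq_sum[of i "n - k + i" j "m - k + j" "i + j - k"] assms
    by (simp add: le_diff_conv2)
  also have "\<dots> = (\<Sum>l | l \<le> k \<and> l \<le> i \<and> k - l \<le> j.
           of_nat (k choose l) * (-1) ^ (i - l)
           * of_nat ((n - k + l) choose (j + l - k)) * of_nat ((m - l) choose (i - l)))"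
    by (rule sum.reindex_bij_witness[where i="\<lambda>l. i - l" and j="\<lambda>l'. i - l'"])
       (use assms in \<open>auto simp: algebra_simps\<close>)
  finally show ?thesis .
qed

lemma multinomial3_eq_choose: "multinomial3 a b c = ((a + b + c) choose c) * ((a + b) choose a)"
proof -
  have "fact (a + b + c) = ((a + b + c) choose c) * ((a + b) choose a) * (fact a * fact b * fact c :: nat)"
    using binomial_fact_lemma[of c "a + b + c"] binomial_fact_lemma[of a "a + b"]
    by (metis add_diff_cancel_left' add_diff_cancel_right' le_add1 le_add2 mult.assoc mult.commute)
  then show ?thesis
    unfolding multinomial3_def by simp
qed

text \<open>Both sides equal \<open>(X + Y)! X! Y!\<close> divided by the factorials of
  \<open>X - u, Y - a, a, u, X - s, Y - w, s, w\<close>, which is symmetric under \<open>(u, a) \<leftrightarrow> (s, w)\<close>.\<close>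
lemma multinomial3_choose_swap:
  assumes "u \<le> X" "s \<le> X" "a \<le> Y" "w \<le> Y"
  shows "multinomial3 (X - u) (Y - a) (a + u) * ((a + u) choose a) * (Y choose w) * (X choose s)
       = multinomial3 (X - s) (Y - w) (s + w) * ((s + w) choose s) * (X choose u) * (Y choose a)"
proof -
  have "real (multinomial3 (X - u) (Y - a) (a + u) * ((a + u) choose a) * (Y choose w) * (X choose s))
      = real (multinomial3 (X - s) (Y - w) (s + w) * ((s + w) choose s) * (X choose u) * (Y choose a))"
    unfolding multinomial3_eq_choose of_nat_mult
    using assms by (simp add: binomial_fact field_simps)
  then show ?thesis
    by (simp only: of_nat_eq_iff)
qed

lemma c_coord_summands_relation:
  assumes "k \<le> min m n" "i \<le> m" "j \<le> n" "l \<le> k" "l \<le> i" "k - l \<le> j"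
  shows "(of_nat (multinomial3 (m - k) (n - k) k) :: 'a::comm_ring_1)
           * (of_nat (k choose l) * (-1) ^ (i - l)
              * of_nat ((n - k + l) choose (j + l - k)) * of_nat ((m - l) choose (i - l)))
       = (-1) ^ i * of_nat (multinomial3 (m - i) (n - j) (i + j - k))
           * (of_nat ((i + j - k) choose (i - l)) * (-1) ^ l
              * of_nat ((m - l) choose (k - l)) * of_nat ((n - k + l) choose l))"
proof -
  have nat_binomials: "multinomial3 (m - k) (n - k) k * (k choose l)
          * ((n - k + l) choose (j + l - k)) * ((m - l) choose (i - l))
      = multinomial3 (m - i) (n - j) (i + j - k) * ((i + j - k) choose (i - l))
          * ((m - l) choose (k - l)) * ((n - k + l) choose l)"
  proof -
    have "k - l \<le> m - l" "i - l \<le> m - l" "l \<le> n - k + l" "j + l - k \<le> n - k + l"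
      using assms by auto
    note swap = multinomial3_choose_swap[OF this]
    have "m - l - (k - l) = m - k" "n - k + l - l = n - k" "l + (k - l) = k"
      "m - l - (i - l) = m - i" "n - k + l - (j + l - k) = n - j" "i - l + (j + l - k) = i + j - k"
      using assms by auto
    then show ?thesis
      using swap by (simp only:)
  qed
  have binomials: "(of_nat (multinomial3 (m - k) (n - k) k) :: 'a) * of_nat (k choose l)
          * of_nat ((n - k + l) choose (j + l - k)) * of_nat ((m - l) choose (i - l))
      = of_nat (multinomial3 (m - i) (n - j) (i + j - k)) * of_nat ((i + j - k) choose (i - l))
          * of_nat ((m - l) choose (k - l)) * of_nat ((n - k + l) choose l)"
    using arg_cong[OF nat_binomials, of "of_nat :: nat \<Rightarrow> 'a"] by (simp only: of_nat_mult)
  have "(-1 :: 'a) ^ i = (-1) ^ (i - l) * (-1) ^ l"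
    using assms(5) by (simp flip: power_add)
  moreover have "(-1 :: 'a) ^ l * (-1) ^ l = 1"
    by (simp flip: power_mult_distrib)
  ultimately have signs: "(-1 :: 'a) ^ (i - l) = (-1) ^ i * (-1) ^ l"
    by (metis mult.assoc mult_1_right)
  show ?thesis
    using arg_cong[OF binomials, of "\<lambda>x. (-1) ^ i * (-1) ^ l * x"]
    unfolding signs by (simp only: ac_simps)
qed

theorem proposition8p3:
  fixes m n k i j :: nat
  assumes "k \<le> min m n"
    and "i \<le> m" and "j \<le> n"
    and "k \<le> i + j" and "i + j \<le> m + n - k"
  shows "of_nat (multinomial3 (m - k) (n - k) k)
           * c_coord (n - k + i) (m - k + j) (i + j - k) i j
         = (-1) ^ i * of_nat (multinomial3 (m - i) (n - j) (i + j - k)) * c_coord m n k i j"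
  unfolding c_coord_dual_eq_sum[OF assms(1-4)] c_coord_eq_sum[OF assms(2,3,4)] sum_distrib_left
  by (rule sum.cong[OF refl], rule c_coord_summands_relation[OF assms(1-3)]) simp_all

end
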